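(* Let $a,b\in\mathbb F^*$, set $\hat a=a\,b\,\theta^n(b^{-1})$, and let $g\in\mathcal R$. Then $g$ is a right divisor of $x^n-a$ if and only if $gb$ is a right divisor of $x^n-\hat a$.
   Context: $\mathbb F$ is a finite field, $\theta\in\mathrm{Aut}(\mathbb F)$, $\mathcal R=\mathbb F[x;\theta]$ the skew polynomial ring (elements $\sum f_ix^i$ with left coefficients, multiplication determined by $xb=\theta(b)x$), $n\in\mathbb N$. $g$ is a right divisor of $f$ if $f=sg$ for some $s\in\mathcal R$. *)

theory Defs
  imports "HOL-Computational_Algebra.Polynomial"
begin

definition field_automorphism :: "('a::field \<Rightarrow> 'a) \<Rightarrow> bool" where
  "field_automorphism \<theta> \<longleftrightarrow> bij \<theta> \<and> (\<forall>x y. \<theta> (x + y) = \<theta> x + \<theta> y) \<and> (\<forall>x y. \<theta> (x * y) = \<theta> x * \<theta> y)"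

text \<open>Skew polynomials F[x;theta] are represented by their coefficient sequences
  (type 'a poly, coefficients written on the left); multiplication is determined by
  x b = theta(b) x, i.e. (sum f_i x^i)(sum g_j x^j) = sum f_i theta^i(g_j) x^(i+j).\<close>
definition skew_mult :: "('a::field \<Rightarrow> 'a) \<Rightarrow> 'a poly \<Rightarrow> 'a poly \<Rightarrow> 'a poly" where
  "skew_mult \<theta> f g = (\<Sum>i\<le>degree f. monom (coeff f i) i * map_poly (\<theta> ^^ i) g)"

definition skew_rdvd :: "('a::field \<Rightarrow> 'a) \<Rightarrow> 'a poly \<Rightarrow> 'a poly \<Rightarrow> bool" where
  "skew_rdvd \<theta> g f \<longleftrightarrow> (\<exists>s. f = skew_mult \<theta> s g)"

end

theory Submission
  imports Defs
begin

(* Right multiplication by a nonzero constant b is invertible and commutes with left factors,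
   so g right-divides f iff g b right-divides f b. Since x^n b = theta^n(b) x^n, we have
   (x^n - a) b = theta^n(b) (x^n - a b theta^n(b^-1)), and a nonzero scalar on the left
   does not affect right divisibility. *)

lemma field_automorphism_one:
  assumes "field_automorphism \<theta>"
  shows "\<theta> 1 = 1"
proof -
  from assms have "bij \<theta>" and mult: "\<And>x y. \<theta> (x * y) = \<theta> x * \<theta> y"
    by (auto simp: field_automorphism_def)
  then obtain y where y: "\<theta> y = 1" by (metis bij_pointE)
  have "\<theta> 1 * \<theta> y = \<theta> y" using mult[of 1 y] by simp
  with y show ?thesis by simp
qed

lemma field_automorphism_zero:
  assumes "field_automorphism \<theta>"
  shows "\<theta> 0 = 0"
proof -
  from assms have "\<theta> (0 + 0) = \<theta> 0 + \<theta> 0" unfolding field_automorphism_def by blast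
  then show ?thesis by (metis add_cancel_right_right)
qed

lemma field_automorphism_funpow:
  assumes "field_automorphism \<theta>"
  shows "(\<theta> ^^ k) 0 = 0" "(\<theta> ^^ k) 1 = 1" "(\<theta> ^^ k) (x * y) = (\<theta> ^^ k) x * (\<theta> ^^ k) y"
proof -
  have mult: "\<And>x y. \<theta> (x * y) = \<theta> x * \<theta> y" using assms by (simp add: field_automorphism_def)
  show "(\<theta> ^^ k) 0 = 0" by (induction k) (simp_all add: field_automorphism_zero[OF assms])
  show "(\<theta> ^^ k) 1 = 1" by (induction k) (simp_all add: field_automorphism_one[OF assms])
  show "(\<theta> ^^ k) (x * y) = (\<theta> ^^ k) x * (\<theta> ^^ k) y" by (induction k) (simp_all add: mult)
qed

lemma coeff_skew_mult:
  assumes "field_automorphism \<theta>"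
  shows "coeff (skew_mult \<theta> f h) k = (\<Sum>i\<le>k. coeff f i * (\<theta> ^^ i) (coeff h (k - i)))"
proof -
  have "coeff (skew_mult \<theta> f h) k =
      (\<Sum>i\<le>degree f. if i \<le> k then coeff f i * (\<theta> ^^ i) (coeff h (k - i)) else 0)"
    unfolding skew_mult_def coeff_sum
    by (intro sum.cong refl)
       (simp add: coeff_monom_mult coeff_map_poly field_automorphism_funpow[OF assms])
  also have "\<dots> = (\<Sum>i\<le>degree f + k. if i \<le> k then coeff f i * (\<theta> ^^ i) (coeff h (k - i)) else 0)"
    by (intro sum.mono_neutral_left) (auto simp: coeff_eq_0)
  also have "\<dots> = (\<Sum>i\<le>k. coeff f i * (\<theta> ^^ i) (coeff h (k - i)))"
    by (subst sum.mono_neutral_right[of "{..degree f + k}" "{..k}"]) auto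
  finally show ?thesis .
qed

lemma coeff_skew_mult_const:
  assumes "field_automorphism \<theta>"
  shows "coeff (skew_mult \<theta> f [:b:]) k = coeff f k * (\<theta> ^^ k) b"
proof -
  have "(\<Sum>i\<le>k. coeff f i * (\<theta> ^^ i) (coeff [:b:] (k - i))) =
        (\<Sum>i\<in>{k}. coeff f i * (\<theta> ^^ i) (coeff [:b:] (k - i)))"
    by (intro sum.mono_neutral_right)
       (auto simp: coeff_pCons field_automorphism_funpow[OF assms] split: nat.splits)
  then show ?thesis by (simp add: coeff_skew_mult[OF assms])
qed

lemma skew_mult_assoc_const:
  assumes "field_automorphism \<theta>"
  shows "skew_mult \<theta> s (skew_mult \<theta> g [:b:]) = skew_mult \<theta> (skew_mult \<theta> s g) [:b:]"
proof (rule poly_eqI)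
  fix k
  have "\<And>i. i \<le> k \<Longrightarrow> (\<theta> ^^ i) ((\<theta> ^^ (k - i)) b) = (\<theta> ^^ k) b"
    by (metis funpow_add le_add_diff_inverse o_apply)
  then have "coeff (skew_mult \<theta> s (skew_mult \<theta> g [:b:])) k =
      (\<Sum>i\<le>k. coeff s i * ((\<theta> ^^ i) (coeff g (k - i)) * (\<theta> ^^ k) b))"
    unfolding coeff_skew_mult[OF assms, of s] coeff_skew_mult_const[OF assms]
    by (intro sum.cong refl) (simp add: field_automorphism_funpow[OF assms])
  also have "\<dots> = coeff (skew_mult \<theta> (skew_mult \<theta> s g) [:b:]) k"
    unfolding coeff_skew_mult_const[OF assms] coeff_skew_mult[OF assms, of s g]
    by (simp add: sum_distrib_right mult.assoc)
  finally show "coeff (skew_mult \<theta> s (skew_mult \<theta> g [:b:])) k =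
      coeff (skew_mult \<theta> (skew_mult \<theta> s g) [:b:]) k" .
qed

lemma skew_mult_smult_left:
  assumes "field_automorphism \<theta>"
  shows "skew_mult \<theta> (smult c s) h = smult c (skew_mult \<theta> s h)"
  by (rule poly_eqI) (simp add: coeff_skew_mult[OF assms] sum_distrib_left mult.assoc)

lemma skew_mult_const_const:
  assumes "field_automorphism \<theta>"
  shows "skew_mult \<theta> (skew_mult \<theta> f [:b:]) [:c:] = skew_mult \<theta> f [:b * c:]"
  by (rule poly_eqI)
     (simp add: coeff_skew_mult_const[OF assms] field_automorphism_funpow[OF assms] mult.assoc)

lemma skew_mult_one_right:
  assumes "field_automorphism \<theta>"
  shows "skew_mult \<theta> f [:1:] = f"
  by (rule poly_eqI) (simp add: coeff_skew_mult_const[OF assms] field_automorphism_funpow[OF assms])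

lemma skew_mult_const_cancel:
  assumes "field_automorphism \<theta>" and "b \<noteq> 0"
  shows "skew_mult \<theta> (skew_mult \<theta> f [:b:]) [:inverse b:] = f"
  using assms by (simp add: skew_mult_const_const skew_mult_one_right)

lemma skew_rdvd_mult_const_iff:
  assumes fa: "field_automorphism \<theta>" and "b \<noteq> 0"
  shows "skew_rdvd \<theta> (skew_mult \<theta> g [:b:]) (skew_mult \<theta> f [:b:]) \<longleftrightarrow> skew_rdvd \<theta> g f"
proof
  assume "skew_rdvd \<theta> (skew_mult \<theta> g [:b:]) (skew_mult \<theta> f [:b:])"
  then obtain s where s: "skew_mult \<theta> f [:b:] = skew_mult \<theta> (skew_mult \<theta> s g) [:b:]"
    by (auto simp: skew_rdvd_def skew_mult_assoc_const[OF fa])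
  have "f = skew_mult \<theta> s g"
    using arg_cong[OF s, of "\<lambda>p. skew_mult \<theta> p [:inverse b:]"]
    by (simp add: skew_mult_const_cancel[OF assms])
  then show "skew_rdvd \<theta> g f" by (auto simp: skew_rdvd_def)
next
  assume "skew_rdvd \<theta> g f"
  then show "skew_rdvd \<theta> (skew_mult \<theta> g [:b:]) (skew_mult \<theta> f [:b:])"
    by (auto simp: skew_rdvd_def skew_mult_assoc_const[OF fa])
qed

lemma skew_rdvd_smult_iff:
  assumes fa: "field_automorphism \<theta>" and "c \<noteq> 0"
  shows "skew_rdvd \<theta> g (smult c f) \<longleftrightarrow> skew_rdvd \<theta> g f"
proof
  assume "skew_rdvd \<theta> g (smult c f)"
  then obtain s where "smult c f = skew_mult \<theta> s g" by (auto simp: skew_rdvd_def)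
  then have "f = smult (inverse c) (skew_mult \<theta> s g)"
    using \<open>c \<noteq> 0\<close> by (metis smult_smult left_inverse smult_1_left)
  then have "f = skew_mult \<theta> (smult (inverse c) s) g"
    by (simp add: skew_mult_smult_left[OF fa])
  then show "skew_rdvd \<theta> g f" by (auto simp: skew_rdvd_def)
next
  assume "skew_rdvd \<theta> g f"
  then obtain s where "f = skew_mult \<theta> s g" by (auto simp: skew_rdvd_def)
  then have "smult c f = skew_mult \<theta> (smult c s) g" by (simp add: skew_mult_smult_left[OF fa])
  then show "skew_rdvd \<theta> g (smult c f)" by (auto simp: skew_rdvd_def)
qed

lemma skew_mult_binomial_const:
  assumes fa: "field_automorphism \<theta>" and "b \<noteq> 0"
  shows "skew_mult \<theta> (monom 1 n - [:a:]) [:b:] =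
         smult ((\<theta> ^^ n) b) (monom 1 n - [:a * b * (\<theta> ^^ n) (inverse b):])"
proof (rule poly_eqI)
  fix k
  have inv: "(\<theta> ^^ n) b * (\<theta> ^^ n) (inverse b) = 1"
    using field_automorphism_funpow(3)[OF fa, of n b "inverse b"] field_automorphism_funpow(2)[OF fa, of n]
      \<open>b \<noteq> 0\<close> by simp
  have coeff_const: "\<And>(x::'a) j. coeff [:x:] j = (if j = 0 then x else 0)"
    by (simp add: coeff_pCons split: nat.splits)
  show "coeff (skew_mult \<theta> (monom 1 n - [:a:]) [:b:]) k =
        coeff (smult ((\<theta> ^^ n) b) (monom 1 n - [:a * b * (\<theta> ^^ n) (inverse b):])) k"
    using inv unfolding coeff_skew_mult_const[OF fa]
    by (cases "k = 0"; cases "k = n")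
       (auto simp: coeff_monom coeff_const field_automorphism_funpow[OF fa] algebra_simps)
qed

theorem proposition4p6:
  fixes \<theta> :: "'a::{finite,field} \<Rightarrow> 'a" and a b :: 'a and g :: "'a poly" and n :: nat
  assumes "field_automorphism \<theta>" and "a \<noteq> 0" and "b \<noteq> 0"
  shows "skew_rdvd \<theta> g (monom 1 n - [:a:]) \<longleftrightarrow>
         skew_rdvd \<theta> (skew_mult \<theta> g [:b:]) (monom 1 n - [:a * b * (\<theta> ^^ n) (inverse b):])"
proof -
  have "(\<theta> ^^ n) b \<noteq> 0"
    using field_automorphism_funpow(3)[OF assms(1), of n b "inverse b"] assms(3)
    by (auto simp: field_automorphism_funpow(2)[OF assms(1)])
  have "skew_rdvd \<theta> g (monom 1 n - [:a:]) \<longleftrightarrow>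
        skew_rdvd \<theta> (skew_mult \<theta> g [:b:]) (skew_mult \<theta> (monom 1 n - [:a:]) [:b:])"
    using skew_rdvd_mult_const_iff[OF assms(1,3)] by simp
  also have "\<dots> \<longleftrightarrow> skew_rdvd \<theta> (skew_mult \<theta> g [:b:])
      (smult ((\<theta> ^^ n) b) (monom 1 n - [:a * b * (\<theta> ^^ n) (inverse b):]))"
    by (simp only: skew_mult_binomial_const[OF assms(1,3)])
  also have "\<dots> \<longleftrightarrow> skew_rdvd \<theta> (skew_mult \<theta> g [:b:])
      (monom 1 n - [:a * b * (\<theta> ^^ n) (inverse b):])"
    by (rule skew_rdvd_smult_iff[OF assms(1) \<open>(\<theta> ^^ n) b \<noteq> 0\<close>])
  finally show ?thesis .
qed

end
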